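(* Assume each $\tilde f_{i,j}:\mathbb{R}^d\to\mathbb{R}$ is convex and $\tilde L$-smooth, let $\lambda>0$ and $p\in(0,1)$, and let $x,w\in\mathbb{R}^{nd}$ be arbitrary. Let $g\in\mathbb{R}^{nd}$ be the random estimator defined in the context. Then $$\mathbb{E}\,\|g-\nabla F(x)\|^2\le2\mathcal{L}\,D_F(w,x),\qquad\text{where }\ \mathcal{L}=\max\Big\{\frac{\tilde L}{n(1-p)},\frac{\lambda}{np}\Big\}.$$
   Context: Each local loss is a finite sum $f_i=\frac1m\sum_{j=1}^m\tilde f_{i,j}$. For $x=[x_1,\dots,x_n]\in\mathbb{R}^{nd}$, define $$F(x)=\frac1n\sum_i f_i(x_i)+\frac{\lambda}{2n}\sum_i\|x_i-\bar x\|^2,\qquad \bar x=\frac1n\sum_i x_i .$$ Its gradient has blocks $(\nabla F(x))_i=\frac1n\nabla f_i(x_i)+\frac\lambda n(x_i-\bar x)$. The Bregman divergence is $D_F(w,x)=F(w)-F(x)-\langle\nabla F(x),w-x\rangle$. The estimator $g$ is defined as follows. - With probability $1-p$: for each client $i$ an index $j\in\{1,\dots,m\}$ is drawn uniformly at random, and $$g_i=\frac{1}{n(1-p)}\big(\nabla\tilde f_{i,j}(x_i)-\nabla\tilde f_{i,j}(w_i)\big)+\frac1n\nabla f_i(w_i)+\frac\lambda n(w_i-\bar w).$$ - With probability $p$: $$g_i=\frac{\lambda}{np}(x_i-\bar x)-\frac{(p^{-1}-1)\lambda}{n}(w_i-\bar w)+\frac1n\nabla f_i(w_i).$$ *)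

theory Defs
  imports "HOL-Analysis.Analysis"
begin

text \<open>Clients are indexed by i < n, local samples by j < m. A point of R^{nd} is a
  family x :: nat => 'a of n blocks in 'a (a Euclidean space standing for R^d).
  ft i j is the sample loss f~_{i,j}; gt i j is its gradient.\<close>

definition L_smooth :: "('a::euclidean_space \<Rightarrow> real) \<Rightarrow> ('a \<Rightarrow> 'a) \<Rightarrow> real \<Rightarrow> bool" where
  "L_smooth f g L \<longleftrightarrow>
     (\<forall>y. (f has_derivative (\<lambda>h. g y \<bullet> h)) (at y)) \<and>
     (\<forall>y z. norm (g y - g z) \<le> L * norm (y - z))"

definition avg :: "nat \<Rightarrow> (nat \<Rightarrow> 'a::real_vector) \<Rightarrow> 'a" where
  "avg n x = (1 / real n) *\<^sub>R (\<Sum>i<n. x i)"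

definition loc_f :: "(nat \<Rightarrow> nat \<Rightarrow> 'a \<Rightarrow> real) \<Rightarrow> nat \<Rightarrow> nat \<Rightarrow> 'a \<Rightarrow> real" where
  "loc_f ft m i y = (1 / real m) * (\<Sum>j<m. ft i j y)"

definition loc_g :: "(nat \<Rightarrow> nat \<Rightarrow> 'a \<Rightarrow> 'a::real_vector) \<Rightarrow> nat \<Rightarrow> nat \<Rightarrow> 'a \<Rightarrow> 'a" where
  "loc_g gt m i y = (1 / real m) *\<^sub>R (\<Sum>j<m. gt i j y)"

definition FF :: "nat \<Rightarrow> nat \<Rightarrow> real \<Rightarrow> (nat \<Rightarrow> nat \<Rightarrow> 'a::real_normed_vector \<Rightarrow> real)
                  \<Rightarrow> (nat \<Rightarrow> 'a) \<Rightarrow> real" where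
  "FF n m lam ft x = (1 / real n) * (\<Sum>i<n. loc_f ft m i (x i))
      + lam / (2 * real n) * (\<Sum>i<n. (norm (x i - avg n x))\<^sup>2)"

definition gradF :: "nat \<Rightarrow> nat \<Rightarrow> real \<Rightarrow> (nat \<Rightarrow> nat \<Rightarrow> 'a \<Rightarrow> 'a::real_vector)
                    \<Rightarrow> (nat \<Rightarrow> 'a) \<Rightarrow> nat \<Rightarrow> 'a" where
  "gradF n m lam gt x i = (1 / real n) *\<^sub>R loc_g gt m i (x i) + (lam / real n) *\<^sub>R (x i - avg n x)"

definition bregF :: "nat \<Rightarrow> nat \<Rightarrow> real \<Rightarrow> (nat \<Rightarrow> nat \<Rightarrow> 'a::real_inner \<Rightarrow> real)
                    \<Rightarrow> (nat \<Rightarrow> nat \<Rightarrow> 'a \<Rightarrow> 'a) \<Rightarrow> (nat \<Rightarrow> 'a) \<Rightarrow> (nat \<Rightarrow> 'a) \<Rightarrow> real" where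
  "bregF n m lam ft gt w x = FF n m lam ft w - FF n m lam ft x
      - (\<Sum>i<n. gradF n m lam gt x i \<bullet> (w i - x i))"

definition sqnorm :: "nat \<Rightarrow> (nat \<Rightarrow> 'a::real_normed_vector) \<Rightarrow> real" where
  "sqnorm n v = (\<Sum>i<n. (norm (v i))\<^sup>2)"

text \<open>Estimator, branch taken with probability 1-p; J i is the index drawn by client i.\<close>
definition est1 :: "nat \<Rightarrow> nat \<Rightarrow> real \<Rightarrow> real \<Rightarrow> (nat \<Rightarrow> nat \<Rightarrow> 'a \<Rightarrow> 'a::real_vector)
                   \<Rightarrow> (nat \<Rightarrow> 'a) \<Rightarrow> (nat \<Rightarrow> 'a) \<Rightarrow> (nat \<Rightarrow> nat) \<Rightarrow> nat \<Rightarrow> 'a" where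
  "est1 n m lam p gt x w J i =
     (1 / (real n * (1 - p))) *\<^sub>R (gt i (J i) (x i) - gt i (J i) (w i))
     + (1 / real n) *\<^sub>R loc_g gt m i (w i) + (lam / real n) *\<^sub>R (w i - avg n w)"

text \<open>Estimator, branch taken with probability p.\<close>
definition est2 :: "nat \<Rightarrow> nat \<Rightarrow> real \<Rightarrow> real \<Rightarrow> (nat \<Rightarrow> nat \<Rightarrow> 'a \<Rightarrow> 'a::real_vector)
                   \<Rightarrow> (nat \<Rightarrow> 'a) \<Rightarrow> (nat \<Rightarrow> 'a) \<Rightarrow> nat \<Rightarrow> 'a" where
  "est2 n m lam p gt x w i =
     (lam / (real n * p)) *\<^sub>R (x i - avg n x)
     - ((1 / p - 1) * lam / real n) *\<^sub>R (w i - avg n w)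
     + (1 / real n) *\<^sub>R loc_g gt m i (w i)"

text \<open>E ||g - grad F(x)||^2: with probability 1-p the indices J are i.i.d. uniform on
  {..<m} (uniform over all J in PiE), with probability p the second branch.\<close>
definition expected_err :: "nat \<Rightarrow> nat \<Rightarrow> real \<Rightarrow> real \<Rightarrow> (nat \<Rightarrow> nat \<Rightarrow> 'a \<Rightarrow> 'a::real_normed_vector)
                   \<Rightarrow> (nat \<Rightarrow> 'a) \<Rightarrow> (nat \<Rightarrow> 'a) \<Rightarrow> real" where
  "expected_err n m lam p gt x w =
     (1 - p) * ((\<Sum>J\<in>PiE {..<n} (\<lambda>_. {..<m}).
                   sqnorm n (\<lambda>i. est1 n m lam p gt x w J i - gradF n m lam gt x i))
                / real (card (PiE {..<n} (\<lambda>_. {..<m}) :: (nat \<Rightarrow> nat) set)))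
     + p * sqnorm n (\<lambda>i. est2 n m lam p gt x w i - gradF n m lam gt x i)"

end

theory Submission
  imports Defs
begin

(*
  Put Z_i = g_i - (grad F(w))_i.  Averaged over both branches, Z_i has mean
  (grad F(x))_i - (grad F(w))_i, so g_i - (grad F(x))_i is Z_i minus its mean and
  its second moment is at most E ||Z_i||^2.  In the first branch Z_i equals
  (grad f_ij(x_i) - grad f_ij(w_i)) / (n(1-p)), whose square is controlled by
  cocoercivity of convex L-smooth functions, ||grad f(x) - grad f(w)||^2 <= 2 L D_f(w,x);
  in the second branch Z_i is lam/(np) times (x_i - xbar) - (w_i - wbar).  On the
  other side, D_F(w,x) splits into the averaged Bregman divergences of the f_ij plus
  lam/(2n) sum_i ||(x_i - xbar) - (w_i - wbar)||^2, and these two nonnegative parts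
  absorb the two bounds with constants L/(n(1-p)) and lam/(np).
*)

lemma has_real_derivative_along_line:
  fixes f :: "'a::euclidean_space \<Rightarrow> real"
  assumes "\<forall>y. (f has_derivative (\<lambda>h. g y \<bullet> h)) (at y)"
  shows "((\<lambda>t. f (z + t *\<^sub>R v)) has_real_derivative (g (z + t *\<^sub>R v) \<bullet> v)) (at t)"
proof -
  have d1: "((\<lambda>t::real. z + t *\<^sub>R v) has_derivative (\<lambda>s. s *\<^sub>R v)) (at t)"
    by (auto intro!: derivative_eq_intros)
  have "((\<lambda>t. f (z + t *\<^sub>R v)) has_derivative (\<lambda>s. g (z + t *\<^sub>R v) \<bullet> (s *\<^sub>R v))) (at t)"
    using diff_chain_at[OF d1 assms[rule_format, of "z + t *\<^sub>R v"]] by (simp add: o_def)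
  then show ?thesis
    by (simp add: has_field_derivative_def mult.commute[of _ "g (z + t *\<^sub>R v) \<bullet> v"] fun_eq_iff)
qed

lemma L_smooth_descent:
  fixes f :: "'a::euclidean_space \<Rightarrow> real"
  assumes "L_smooth f g L"
  shows "f y \<le> f z + g z \<bullet> (y - z) + L / 2 * (norm (y - z))\<^sup>2"
proof -
  define v where "v = y - z"
  have D: "\<forall>y. (f has_derivative (\<lambda>h. g y \<bullet> h)) (at y)" and Lip: "\<And>a b. norm (g a - g b) \<le> L * norm (a - b)"
    using assms unfolding L_smooth_def by auto
  define k where "k t = f (z + t *\<^sub>R v) - t * (g z \<bullet> v) - L / 2 * t\<^sup>2 * (norm v)\<^sup>2" for t
  have "k 0 \<ge> k 1"
  proof (rule DERIV_nonpos_imp_nonincreasing[of 0 1 k])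
    fix t :: real assume t: "0 \<le> t" "t \<le> 1"
    have "(k has_real_derivative (g (z + t *\<^sub>R v) \<bullet> v - g z \<bullet> v - L / 2 * (2 * t) * (norm v)\<^sup>2)) (at t)"
      unfolding k_def
      apply (intro DERIV_diff[OF DERIV_diff[OF has_real_derivative_along_line[OF D]]])
      subgoal by (auto intro!: derivative_eq_intros)
      subgoal by (rule derivative_eq_intros refl | simp)+
      done
    moreover have "g (z + t *\<^sub>R v) \<bullet> v - g z \<bullet> v - L / 2 * (2 * t) * (norm v)\<^sup>2 \<le> 0"
    proof -
      have "g (z + t *\<^sub>R v) \<bullet> v - g z \<bullet> v = (g (z + t *\<^sub>R v) - g z) \<bullet> v" by (simp add: inner_diff_left)
      also have "\<dots> \<le> norm (g (z + t *\<^sub>R v) - g z) * norm v" by (rule norm_cauchy_schwarz)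
      also have "\<dots> \<le> (L * norm (t *\<^sub>R v)) * norm v"
        using Lip[of "z + t *\<^sub>R v" z] by (intro mult_right_mono) auto
      also have "\<dots> = L * t * (norm v)\<^sup>2" using t by (simp add: power2_eq_square)
      finally show ?thesis by simp
    qed
    ultimately show "\<exists>y. (k has_real_derivative y) (at t) \<and> y \<le> 0" by blast
  qed simp
  then show ?thesis unfolding k_def v_def by (simp add: algebra_simps)
qed

lemma convex_above_tangent:
  fixes f :: "'a::euclidean_space \<Rightarrow> real"
  assumes "L_smooth f g L" and cv: "convex_on UNIV f"
  shows "f y \<ge> f z + g z \<bullet> (y - z)"
proof -
  define v where "v = y - z"
  have D: "\<forall>y. (f has_derivative (\<lambda>h. g y \<bullet> h)) (at y)"
    using assms unfolding L_smooth_def by auto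
  define h where "h t = f (z + t *\<^sub>R v)" for t
  have "convex_on UNIV h"
  proof (rule convex_onI)
    fix t a b :: real assume t: "0 < t" "t < 1"
    have "h ((1 - t) *\<^sub>R a + t *\<^sub>R b) = f ((1 - t) *\<^sub>R (z + a *\<^sub>R v) + t *\<^sub>R (z + b *\<^sub>R v))"
      unfolding h_def by (simp add: algebra_simps)
    also have "\<dots> \<le> (1 - t) * h a + t * h b"
      unfolding h_def using t by (intro convex_onD[OF cv]) auto
    finally show "h ((1 - t) *\<^sub>R a + t *\<^sub>R b) \<le> (1 - t) * h a + t * h b" .
  qed simp
  moreover have "(h has_field_derivative (g z \<bullet> v)) (at 0 within UNIV)"
    unfolding h_def using has_real_derivative_along_line[OF D, of z v 0] by simp
  ultimately have "h 1 - h 0 \<ge> (g z \<bullet> v) * (1 - 0)"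
    by (intro convex_on_imp_above_tangent) auto
  then show ?thesis unfolding h_def v_def by simp
qed

lemma L_smooth_const_nonneg:
  fixes f :: "'a::euclidean_space \<Rightarrow> real"
  assumes "L_smooth f g L" shows "L \<ge> 0"
proof -
  obtain e :: 'a where e: "norm e = 1" using vector_choose_size[of 1] by auto
  have "0 \<le> norm (g e - g 0)" by simp
  also have "\<dots> \<le> L * norm (e - 0)" using assms unfolding L_smooth_def by blast
  finally show ?thesis using e by simp
qed

lemma convex_L_smooth_cocoercive:
  fixes f :: "'a::euclidean_space \<Rightarrow> real"
  assumes sm: "L_smooth f g L" and cv: "convex_on UNIV f"
  shows "(norm (g x - g w))\<^sup>2 \<le> 2 * L * (f w - f x - g x \<bullet> (w - x))"
proof (cases "L = 0")
  case True
  have "norm (g x - g w) \<le> 0" using sm True unfolding L_smooth_def by (metis mult_zero_left)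
  then show ?thesis using True by simp
next
  case False
  with L_smooth_const_nonneg[OF sm] have L: "L > 0" by simp
  define e where "e = g w - g x"
  \<comment> \<open>the gradient step from \<open>w\<close> for \<open>\<lambda>u. f u - g x \<bullet> u\<close>, whose gradient at \<open>w\<close> is \<open>e\<close>\<close>
  define y where "y = w - (1 / L) *\<^sub>R e"
  have descent: "f y \<le> f w + g w \<bullet> (y - w) + L / 2 * (norm (y - w))\<^sup>2" by (rule L_smooth_descent[OF sm])
  have tangent: "f y \<ge> f x + g x \<bullet> (y - x)" by (rule convex_above_tangent[OF sm cv])
  have "g x \<bullet> (y - x) = g x \<bullet> (w - x) + g x \<bullet> (y - w)" by (simp add: inner_diff_right)
  with descent tangent have "f x + g x \<bullet> (w - x) \<le> f w + e \<bullet> (y - w) + L / 2 * (norm (y - w))\<^sup>2"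
    unfolding e_def by (simp add: inner_diff_left)
  also have "e \<bullet> (y - w) = - (1/L) * (norm e)\<^sup>2" unfolding y_def by (simp add: power2_norm_eq_inner)
  also have "L / 2 * (norm (y - w))\<^sup>2 = (1 / (2*L)) * (norm e)\<^sup>2" unfolding y_def using L
    by (simp add: power2_eq_square field_simps)
  finally have "(1/(2*L)) * (norm e)\<^sup>2 \<le> f w - f x - g x \<bullet> (w - x)" using L by (simp add: field_simps)
  then show ?thesis using L unfolding e_def by (simp add: field_simps norm_minus_commute)
qed

lemma sum_PiE_coordinate:
  fixes h :: "'b \<Rightarrow> 'c::comm_semiring_1"
  assumes "finite I" "i \<in> I" "\<And>k. k \<in> I \<Longrightarrow> finite (B k)"
  shows "(\<Sum>J\<in>PiE I B. h (J i)) = (\<Sum>y\<in>B i. h y) * of_nat (\<Prod>k\<in>I - {i}. card (B k))"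
proof -
  define f where "f k y = (if k = i then h y else 1)" for k y
  have "(\<Sum>J\<in>PiE I B. h (J i)) = (\<Sum>J\<in>PiE I B. \<Prod>k\<in>I. f k (J k))"
    using assms(1,2) by (intro sum.cong refl) (simp add: f_def prod.If_cases Int_absorb1)
  also have "\<dots> = (\<Prod>k\<in>I. \<Sum>y\<in>B k. f k y)"
    using assms by (intro prod_sum_PiE[symmetric]) auto
  also have "\<dots> = (\<Sum>y\<in>B i. h y) * (\<Prod>k\<in>I - {i}. of_nat (card (B k)))"
    using assms(1,2) by (simp add: prod.remove f_def)
  finally show ?thesis by simp
qed

lemma average_PiE_coordinate:
  fixes h :: "'b \<Rightarrow> real"
  assumes "finite I" "i \<in> I" "\<And>k. k \<in> I \<Longrightarrow> finite (B k) \<and> B k \<noteq> {}"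
  shows "(\<Sum>J\<in>PiE I B. h (J i)) / card (PiE I B) = (\<Sum>y\<in>B i. h y) / card (B i)"
proof -
  have "card (PiE I B) = card (B i) * (\<Prod>k\<in>I - {i}. card (B k))"
    using assms(1,2) by (simp add: card_PiE prod.remove)
  moreover have "(\<Prod>k\<in>I - {i}. card (B k)) \<noteq> 0"
    using assms by simp
  ultimately show ?thesis
    using sum_PiE_coordinate[of I i B h] assms by simp
qed

lemma power2_norm_diff: "(norm (a - b))\<^sup>2 = (norm a)\<^sup>2 - 2 * (a \<bullet> b) + (norm (b::'a::real_inner))\<^sup>2"
  by (simp add: power2_norm_eq_inner inner_diff_left inner_diff_right inner_commute)

lemma mixture_second_moment:
  fixes z :: "'b \<Rightarrow> 'a::real_inner"
  assumes "finite S" "S \<noteq> {}"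
    and mean: "(1 - p) *\<^sub>R ((1 / card S) *\<^sub>R (\<Sum>j\<in>S. z j)) + p *\<^sub>R y = \<mu>"
  shows "(1 - p) * ((\<Sum>j\<in>S. (norm (z j - \<mu>))\<^sup>2) / card S) + p * (norm (y - \<mu>))\<^sup>2
       = (1 - p) * ((\<Sum>j\<in>S. (norm (z j))\<^sup>2) / card S) + p * (norm y)\<^sup>2 - (norm \<mu>)\<^sup>2"
proof -
  define zbar where "zbar = (1 / card S) *\<^sub>R (\<Sum>j\<in>S. z j)"
  have "(\<Sum>j\<in>S. (norm (z j - \<mu>))\<^sup>2)
      = (\<Sum>j\<in>S. (norm (z j))\<^sup>2) - 2 * ((\<Sum>j\<in>S. z j) \<bullet> \<mu>) + card S * (norm \<mu>)\<^sup>2"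
    by (simp add: power2_norm_diff sum_subtractf sum.distrib inner_sum_left sum_distrib_left)
  then have "(\<Sum>j\<in>S. (norm (z j - \<mu>))\<^sup>2) / card S
      = (\<Sum>j\<in>S. (norm (z j))\<^sup>2) / card S - 2 * (zbar \<bullet> \<mu>) + (norm \<mu>)\<^sup>2"
    using assms(1,2) by (simp add: zbar_def field_simps)
  moreover have "(norm \<mu>)\<^sup>2 = (1 - p) * (zbar \<bullet> \<mu>) + p * (y \<bullet> \<mu>)"
    using mean by (auto simp: zbar_def power2_norm_eq_inner inner_add_left)
  moreover have "(norm (y - \<mu>))\<^sup>2 = (norm y)\<^sup>2 - 2 * (y \<bullet> \<mu>) + (norm \<mu>)\<^sup>2"
    by (rule power2_norm_diff)
  ultimately show ?thesis
    by algebra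
qed

lemma est1_minus_gradF:
  "est1 n m lam p gt x w J i - gradF n m lam gt w i
     = (1 / (real n * (1 - p))) *\<^sub>R (gt i (J i) (x i) - gt i (J i) (w i))"
  by (simp add: est1_def gradF_def)

lemma est2_minus_gradF:
  assumes "p \<noteq> 0"
  shows "est2 n m lam p gt x w i - gradF n m lam gt w i
     = (lam / (real n * p)) *\<^sub>R ((x i - avg n x) - (w i - avg n w))"
proof -
  have "(1 / p - 1) * lam / real n + lam / real n = lam / (real n * p)"
    using assms by (cases "n = 0") (simp_all add: field_simps)
  then show ?thesis
    unfolding est2_def gradF_def by (simp add: algebra_simps flip: scaleR_add_left)
qed

lemma estimator_unbiased:
  assumes "p \<noteq> 0" "p \<noteq> 1"
  shows "(1 - p) *\<^sub>R ((1 / real m) *\<^sub>R (\<Sum>j<m. est1 n m lam p gt x w (\<lambda>_. j) i - gradF n m lam gt w i))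
           + p *\<^sub>R (est2 n m lam p gt x w i - gradF n m lam gt w i)
         = gradF n m lam gt x i - gradF n m lam gt w i"
proof -
  have "(1 - p) *\<^sub>R ((1 / real m) *\<^sub>R (\<Sum>j<m. est1 n m lam p gt x w (\<lambda>_. j) i - gradF n m lam gt w i))
      = (1 / real n) *\<^sub>R (loc_g gt m i (x i) - loc_g gt m i (w i))"
    using assms by (simp add: est1_minus_gradF loc_g_def scaleR_sum_right[symmetric] sum_subtractf
        scaleR_diff_right mult.commute)
  moreover have "p *\<^sub>R (est2 n m lam p gt x w i - gradF n m lam gt w i)
      = (lam / real n) *\<^sub>R ((x i - avg n x) - (w i - avg n w))"
    using assms by (simp add: est2_minus_gradF)
  ultimately show ?thesis
    by (simp add: gradF_def algebra_simps)
qed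

lemma expected_err_eq_sum_clients:
  assumes "m \<ge> 1"
  shows "expected_err n m lam p gt x w
    = (\<Sum>i<n. (1 - p) * ((\<Sum>j<m. (norm (est1 n m lam p gt x w (\<lambda>_. j) i - gradF n m lam gt x i))\<^sup>2) / m)
              + p * (norm (est2 n m lam p gt x w i - gradF n m lam gt x i))\<^sup>2)"
proof -
  define P where "P = (PiE {..<n} (\<lambda>_. {..<m}) :: (nat \<Rightarrow> nat) set)"
  define h where "h i j = (norm (est1 n m lam p gt x w (\<lambda>_. j) i - gradF n m lam gt x i))\<^sup>2" for i j
  have est1_local: "est1 n m lam p gt x w J i = est1 n m lam p gt x w (\<lambda>_. J i) i" for J i
    by (simp add: est1_def)
  have "(\<Sum>J\<in>P. sqnorm n (\<lambda>i. est1 n m lam p gt x w J i - gradF n m lam gt x i)) / card P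
      = (\<Sum>i<n. (\<Sum>J\<in>P. h i (J i)) / card P)"
    unfolding sqnorm_def h_def by (subst est1_local) (simp add: sum.swap[of _ P] sum_divide_distrib)
  also have "\<dots> = (\<Sum>i<n. (\<Sum>j<m. h i j) / m)"
    unfolding P_def using assms
    by (intro sum.cong refl) (subst average_PiE_coordinate; auto simp: lessThan_empty_iff)
  finally show ?thesis
    unfolding expected_err_def P_def[symmetric] sqnorm_def h_def
    by (simp add: sum.distrib sum_distrib_left)
qed

lemma estimator_second_moment:
  fixes gt :: "nat \<Rightarrow> nat \<Rightarrow> 'a::real_inner \<Rightarrow> 'a"
  assumes "0 < p" "p < 1"
  shows "(1 - p) * ((\<Sum>j<m. (norm (est1 n m lam p gt x w (\<lambda>_. j) i - gradF n m lam gt w i))\<^sup>2) / m)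
           + p * (norm (est2 n m lam p gt x w i - gradF n m lam gt w i))\<^sup>2
         = (\<Sum>j<m. (norm (gt i j (x i) - gt i j (w i)))\<^sup>2) / (m * (real n)\<^sup>2 * (1 - p))
           + lam\<^sup>2 / ((real n)\<^sup>2 * p) * (norm ((x i - avg n x) - (w i - avg n w)))\<^sup>2"
proof -
  have sum_est1: "(\<Sum>j<m. (norm (est1 n m lam p gt x w (\<lambda>_. j) i - gradF n m lam gt w i))\<^sup>2)
      = (\<Sum>j<m. (norm (gt i j (x i) - gt i j (w i)))\<^sup>2) / ((real n)\<^sup>2 * (1 - p)\<^sup>2)"
    by (simp add: est1_minus_gradF power_mult_distrib power_divide sum_divide_distrib)
  have norm_est2: "(norm (est2 n m lam p gt x w i - gradF n m lam gt w i))\<^sup>2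
      = lam\<^sup>2 / ((real n)\<^sup>2 * p\<^sup>2) * (norm ((x i - avg n x) - (w i - avg n w)))\<^sup>2"
    using assms by (simp add: est2_minus_gradF power_mult_distrib power_divide)
  have "(1 - p) * (A / ((real n)\<^sup>2 * (1 - p)\<^sup>2) / m) + p * (lam\<^sup>2 / ((real n)\<^sup>2 * p\<^sup>2) * C)
      = A / (m * (real n)\<^sup>2 * (1 - p)) + lam\<^sup>2 / ((real n)\<^sup>2 * p) * C" for A C
    using assms by (simp add: power2_eq_square mult_ac)
  then show ?thesis
    unfolding sum_est1 norm_est2 .
qed

lemma expected_err_le_second_moment:
  fixes gt :: "nat \<Rightarrow> nat \<Rightarrow> 'a::real_inner \<Rightarrow> 'a"
  assumes "m \<ge> 1" "0 < p" "p < 1"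
  shows "expected_err n m lam p gt x w
    \<le> (\<Sum>i<n. (\<Sum>j<m. (norm (gt i j (x i) - gt i j (w i)))\<^sup>2) / (m * (real n)\<^sup>2 * (1 - p))
              + lam\<^sup>2 / ((real n)\<^sup>2 * p) * (norm ((x i - avg n x) - (w i - avg n w)))\<^sup>2)"
  unfolding expected_err_eq_sum_clients[OF assms(1)]
proof (rule sum_mono)
  fix i
  define z where "z j = est1 n m lam p gt x w (\<lambda>_. j) i - gradF n m lam gt w i" for j
  define y where "y = est2 n m lam p gt x w i - gradF n m lam gt w i"
  define \<mu> where "\<mu> = gradF n m lam gt x i - gradF n m lam gt w i"
  have mean: "(1 - p) *\<^sub>R ((1 / card {..<m}) *\<^sub>R (\<Sum>j\<in>{..<m}. z j)) + p *\<^sub>R y = \<mu>"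
    unfolding z_def y_def \<mu>_def using estimator_unbiased[of p m n lam gt x w i] assms by simp
  have "(1 - p) * ((\<Sum>j<m. (norm (z j - \<mu>))\<^sup>2) / m) + p * (norm (y - \<mu>))\<^sup>2
      = (1 - p) * ((\<Sum>j<m. (norm (z j))\<^sup>2) / m) + p * (norm y)\<^sup>2 - (norm \<mu>)\<^sup>2"
    using mixture_second_moment[OF _ _ mean] assms by (simp add: lessThan_empty_iff)
  also have "\<dots> \<le> (1 - p) * ((\<Sum>j<m. (norm (z j))\<^sup>2) / m) + p * (norm y)\<^sup>2"
    by simp
  also have "\<dots> = (\<Sum>j<m. (norm (gt i j (x i) - gt i j (w i)))\<^sup>2) / (m * (real n)\<^sup>2 * (1 - p))
              + lam\<^sup>2 / ((real n)\<^sup>2 * p) * (norm ((x i - avg n x) - (w i - avg n w)))\<^sup>2"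
    unfolding z_def y_def using assms(2,3) by (rule estimator_second_moment)
  finally show "(1 - p) * ((\<Sum>j<m. (norm (est1 n m lam p gt x w (\<lambda>_. j) i - gradF n m lam gt x i))\<^sup>2) / m)
              + p * (norm (est2 n m lam p gt x w i - gradF n m lam gt x i))\<^sup>2 \<le> \<dots>"
    by (simp add: z_def y_def \<mu>_def)
qed

lemma sum_minus_avg:
  fixes x :: "nat \<Rightarrow> 'a::real_vector"
  assumes "n \<ge> 1"
  shows "(\<Sum>i<n. x i - avg n x) = 0"
  using assms by (simp add: sum_subtractf avg_def sum_constant_scaleR)

lemma bregman_centered_sq_norm:
  fixes x w :: "nat \<Rightarrow> 'a::real_inner"
  assumes "n \<ge> 1"
  shows "(\<Sum>i<n. (norm (w i - avg n w))\<^sup>2) - (\<Sum>i<n. (norm (x i - avg n x))\<^sup>2)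
           - 2 * (\<Sum>i<n. (x i - avg n x) \<bullet> (w i - x i))
         = (\<Sum>i<n. (norm ((x i - avg n x) - (w i - avg n w)))\<^sup>2)"
proof -
  define u where "u i = x i - avg n x" for i
  define v where "v i = w i - avg n w" for i
  have "(\<Sum>i<n. u i \<bullet> (w i - x i)) = (\<Sum>i<n. u i \<bullet> (v i - u i)) + (\<Sum>i<n. u i) \<bullet> (avg n w - avg n x)"
    by (simp add: u_def v_def inner_sum_left sum.distrib[symmetric] algebra_simps)
  also have "(\<Sum>i<n. u i) = 0"
    unfolding u_def using assms by (rule sum_minus_avg)
  finally have "(\<Sum>i<n. u i \<bullet> (w i - x i)) = (\<Sum>i<n. u i \<bullet> (v i - u i))"
    by simp
  moreover have "(norm (u i - v i))\<^sup>2 = (norm (v i))\<^sup>2 - (norm (u i))\<^sup>2 - 2 * (u i \<bullet> (v i - u i))" for i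
    by (simp add: power2_norm_eq_inner inner_diff_left inner_diff_right inner_commute)
  ultimately show ?thesis
    unfolding u_def[symmetric] v_def[symmetric] by (simp add: sum_subtractf sum_distrib_left)
qed

lemma bregF_eq_sum_clients:
  fixes ft :: "nat \<Rightarrow> nat \<Rightarrow> 'a::real_inner \<Rightarrow> real"
  assumes "n \<ge> 1"
  shows "bregF n m lam ft gt w x
    = (\<Sum>i<n. (1 / real n) * ((\<Sum>j<m. ft i j (w i) - ft i j (x i) - gt i j (x i) \<bullet> (w i - x i)) / m)
              + lam / (2 * real n) * (norm ((x i - avg n x) - (w i - avg n w)))\<^sup>2)"
proof -
  have local_bregman: "loc_f ft m i (w i) - loc_f ft m i (x i) - loc_g gt m i (x i) \<bullet> (w i - x i)
      = (\<Sum>j<m. ft i j (w i) - ft i j (x i) - gt i j (x i) \<bullet> (w i - x i)) / m" for i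
    by (simp add: loc_f_def loc_g_def inner_sum_left sum_subtractf sum.distrib
        diff_divide_distrib add_divide_distrib)
  have "bregF n m lam ft gt w x
      = (1 / real n) * (\<Sum>i<n. loc_f ft m i (w i) - loc_f ft m i (x i) - loc_g gt m i (x i) \<bullet> (w i - x i))
        + lam / (2 * real n) * ((\<Sum>i<n. (norm (w i - avg n w))\<^sup>2) - (\<Sum>i<n. (norm (x i - avg n x))\<^sup>2)
                           - 2 * (\<Sum>i<n. (x i - avg n x) \<bullet> (w i - x i)))"
    using assms
    by (simp add: bregF_def FF_def gradF_def inner_add_left sum_subtractf sum.distrib
        sum_distrib_left algebra_simps)
  then show ?thesis
    unfolding local_bregman bregman_centered_sq_norm[OF assms]
    by (simp add: sum.distrib sum_distrib_left)
qed

lemma weighted_sum_le_max_weight: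
  fixes A B C Lt lam p :: real and m n :: nat
  assumes "A \<le> 2 * Lt * B" "0 \<le> B" "0 \<le> C" "0 \<le> lam" "0 < p" "p < 1"
  shows "A / (m * (real n)\<^sup>2 * (1 - p)) + lam\<^sup>2 / ((real n)\<^sup>2 * p) * C
    \<le> 2 * max (Lt / (real n * (1 - p))) (lam / (real n * p)) * ((1 / real n) * (B / real m) + lam / (2 * real n) * C)"
    (is "_ \<le> 2 * ?L * (?X + ?Y)")
proof -
  have "A / (m * (real n)\<^sup>2 * (1 - p)) \<le> 2 * Lt * B / (m * (real n)\<^sup>2 * (1 - p))"
    using assms by (intro divide_right_mono) auto
  also have "\<dots> = 2 * (Lt / (n * (1 - p))) * ?X"
    by (simp add: power2_eq_square mult_ac)
  also have "\<dots> \<le> 2 * ?L * ?X"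
    using assms(2) by (intro mult_right_mono) simp_all
  finally have "A / (m * (real n)\<^sup>2 * (1 - p)) \<le> 2 * ?L * ?X" .
  moreover have "lam\<^sup>2 / ((real n)\<^sup>2 * p) * C = 2 * (lam / (n * p)) * ?Y"
    by (simp add: power2_eq_square mult_ac)
  moreover have "\<dots> \<le> 2 * ?L * ?Y"
    using assms(3,4) by (intro mult_right_mono) simp_all
  ultimately show ?thesis
    by (simp add: distrib_left)
qed

theorem mainTheorem7:
  fixes n m :: nat and lam p Lt :: real
    and ft :: "nat \<Rightarrow> nat \<Rightarrow> 'a::euclidean_space \<Rightarrow> real"
    and gt :: "nat \<Rightarrow> nat \<Rightarrow> 'a \<Rightarrow> 'a"
    and x w :: "nat \<Rightarrow> 'a"
  assumes "n \<ge> 1" and "m \<ge> 1"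
    and "\<And>i j. i < n \<Longrightarrow> j < m \<Longrightarrow> convex_on UNIV (ft i j)"
    and "\<And>i j. i < n \<Longrightarrow> j < m \<Longrightarrow> L_smooth (ft i j) (gt i j) Lt"
    and "lam > 0" and "0 < p" and "p < 1"
  shows "expected_err n m lam p gt x w
           \<le> 2 * max (Lt / (real n * (1 - p))) (lam / (real n * p)) * bregF n m lam ft gt w x"
proof -
  note n = assms(1) and m = assms(2) and convex = assms(3) and smooth = assms(4)
    and p = assms(6,7)
  define L where "L = max (Lt / (real n * (1 - p))) (lam / (real n * p))"
  define D where "D i j = ft i j (w i) - ft i j (x i) - gt i j (x i) \<bullet> (w i - x i)" for i j
  define C where "C i = (norm ((x i - avg n x) - (w i - avg n w)))\<^sup>2" for i
  have "expected_err n m lam p gt x w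
      \<le> (\<Sum>i<n. (\<Sum>j<m. (norm (gt i j (x i) - gt i j (w i)))\<^sup>2) / (m * (real n)\<^sup>2 * (1 - p))
                + lam\<^sup>2 / ((real n)\<^sup>2 * p) * C i)"
    unfolding C_def using expected_err_le_second_moment m p .
  also have "\<dots> \<le> (\<Sum>i<n. 2 * L * ((1 / real n) * ((\<Sum>j<m. D i j) / real m) + lam / (2 * real n) * C i))"
  proof (intro sum_mono, unfold L_def, rule weighted_sum_le_max_weight)
    fix i assume "i \<in> {..<n}"
    then show "(\<Sum>j<m. (norm (gt i j (x i) - gt i j (w i)))\<^sup>2) \<le> 2 * Lt * (\<Sum>j<m. D i j)"
      unfolding D_def sum_distrib_left by (intro sum_mono convex_L_smooth_cocoercive smooth convex) auto
    show "0 \<le> (\<Sum>j<m. D i j)"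
      using \<open>i \<in> {..<n}\<close> convex_above_tangent[OF smooth convex, of i _ "x i" "w i"]
      by (intro sum_nonneg) (force simp: D_def)
  qed (use assms(5) p in \<open>auto simp: C_def\<close>)
  also have "\<dots> = 2 * L * bregF n m lam ft gt w x"
    unfolding bregF_eq_sum_clients[OF n] D_def C_def by (simp add: sum_distrib_left)
  finally show ?thesis
    unfolding L_def .
qed

end
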